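(* Fix $N\ge1$, $L>0$, $\alpha>0$, $\lambda_e>0$, $\epsilon\in(0,1)$, and let $$K_5=\frac{2N}{\alpha}\left[\left(\frac{L}{N}\right)^\alpha+1\right]W_0\!\left(\frac{\alpha}{2}\left[\frac{\ln\frac{1}{1-\epsilon}}{NK_1}\right]^{-\alpha/2}\right),\qquad K_1=\pi\lambda_e\Gamma\!\left(\tfrac{2}{\alpha}+1\right).$$ Consider, as functions of $p>0$, the optimal non-on-off-transmission rates $R_t^*(p)=R_e^*(p)+\frac{1}{\ln2}W_0\!\big(2^{-R_e^*(p)}/K_4(p)\big)$ and $R_s^*(p)=\frac{1}{\ln2}W_0\!\big(2^{-R_e^*(p)}/K_4(p)\big)$, where $K_4(p)=\frac{N[(L/N)^\alpha+1]}{p}$ and $R_e^*(p)=\log_2\!\left[\frac{2p}{\alpha}W_0\!\left(\frac{\alpha}{2}\left[\frac{\ln\frac{1}{1-\epsilon}}{NK_1}\right]^{-\alpha/2}\right)+1\right]$, and the corresponding optimal throughput $\mathbb{U}^*(p)=\frac{R_s^*(p)}{N}\exp\!\left[-K_4(p)\left(2^{R_t^*(p)}-1\right)\right]$. Then as $p\to\infty$: $R_t^*(p)\to\infty$, $$R_s^*(p)\to\frac{1}{\ln 2}W_0\!\left(\frac{1}{K_5}\right),\qquad \mathbb{U}^*(p)\to\frac{1}{N\ln2}W_0\!\left(\frac{1}{K_5}\right)\exp\!\left[-K_5\exp\!\left(W_0\!\left(\frac{1}{K_5}\right)\right)\right].$$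
   Context: These are the optimal wiretap-code rates and resulting secure transmission throughput $\mathbb{U}=\mathcal{P}_cR_s/N$ (with end-to-end connection probability $\mathcal{P}_c=\exp[-N(2^{R_t}-1)((L/N)^\alpha+1)/p]$) of the non-on-off transmission scheme in an $N$-hop linear network of length $L$ with equal hops, subject to end-to-end secrecy outage probability $\epsilon$ against Poisson eavesdroppers of density $\lambda_e$; $p$ is the transmitter-side SNR, $\alpha$ the path-loss exponent. $W_0$ is the principal branch of the Lambert W function. *)

theory Defs
  imports "HOL-Analysis.Analysis"
begin

definition lambertW0 :: "real \<Rightarrow> real" where
  "lambertW0 x = (THE w. w \<ge> -1 \<and> w * exp w = x)"

end

theory Submission
  imports Defs "HOL-Real_Asymp.Real_Asymp"
begin

text \<open>Write \<open>K4 p = A / p\<close> and \<open>Ree p = log 2 (c p + 1)\<close> with \<open>c = 2 Wc / \<alpha>\<close>, so that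
  \<open>K5 = A c\<close>. The argument of \<open>W\<^sub>0\<close> in both rates is \<open>2 powr (- Ree p) / K4 p = p / (A (c p + 1))\<close>,
  which tends to \<open>1 / K5\<close>; continuity of \<open>W\<^sub>0\<close> gives the limit of \<open>Rss\<close>, and \<open>Rtt = Ree + Rss\<close>
  diverges with \<open>Ree\<close>. In the throughput, \<open>2 powr Rtt p = (c p + 1) exp (W\<^sub>0 (\<dots>))\<close>, so the
  exponent \<open>K4 p (2 powr Rtt p - 1)\<close> tends to \<open>A c exp (W\<^sub>0 (1 / K5)) = K5 exp (W\<^sub>0 (1 / K5))\<close>.\<close>

lemma mult_exp_strict_mono:
  assumes "0 \<le> a" "a < b"
  shows "a * exp a < b * exp (b::real)"
proof -
  have "a * exp a \<le> a * exp b" using assms by (intro mult_left_mono) auto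
  also have "\<dots> < b * exp b" using assms by (intro mult_strict_right_mono) auto
  finally show ?thesis .
qed

lemma lambertW0_eqI:
  assumes "0 \<le> w" "w * exp w = y"
  shows "lambertW0 y = w"
  unfolding lambertW0_def
proof (rule the_equality)
  show "w \<ge> -1 \<and> w * exp w = y" using assms by simp
next
  fix v assume v: "v \<ge> -1 \<and> v * exp v = y"
  have "0 \<le> v * exp v" using v assms by (metis exp_ge_zero mult_nonneg_nonneg)
  then have "0 \<le> v" by (simp add: zero_le_mult_iff)
  show "v = w"
  proof (cases v w rule: linorder_cases)
    case less then show ?thesis using mult_exp_strict_mono[of v w] \<open>0 \<le> v\<close> v assms by simp
  next
    case greater then show ?thesis using mult_exp_strict_mono[of w v] v assms by simp
  qed
qed

lemma mult_exp_surj_nonneg: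
  assumes "0 \<le> (y::real)"
  obtains w where "0 \<le> w" "w * exp w = y"
proof -
  have "\<exists>w. 0 \<le> w \<and> w \<le> y \<and> (\<lambda>w. w * exp w) w = y"
    using assms by (intro IVT) (auto intro!: continuous_intros mult_le_cancel_left1[THEN iffD2])
  then show ?thesis using that by auto
qed

lemma lambertW0_nonneg: "0 \<le> y \<Longrightarrow> 0 \<le> lambertW0 y"
  by (metis lambertW0_eqI mult_exp_surj_nonneg)

lemma lambertW0_mult_exp: "0 \<le> y \<Longrightarrow> lambertW0 y * exp (lambertW0 y) = y"
  by (metis lambertW0_eqI mult_exp_surj_nonneg)

lemma lambertW0_pos:
  assumes "0 < y"
  shows "0 < lambertW0 y"
  using lambertW0_nonneg[of y] lambertW0_mult_exp[of y] assms by (cases "lambertW0 y = 0") auto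

lemma isCont_lambertW0:
  assumes "0 < y"
  shows "isCont lambertW0 y"
proof -
  define x where "x = lambertW0 y"
  have "0 < x" "y = x * exp x"
    using lambertW0_pos[OF assms] lambertW0_mult_exp[of y] assms by (auto simp: x_def)
  moreover have "isCont lambertW0 ((\<lambda>w. w * exp w) x)"
  proof (rule isCont_inverse_function[where d = "x/2" and f = "\<lambda>w. w * exp w"])
    fix z assume "\<bar>z - x\<bar> \<le> x/2"
    then have "0 \<le> z" using \<open>0 < x\<close> by linarith
    then show "lambertW0 (z * exp z) = z" by (rule lambertW0_eqI) simp
  qed (use \<open>0 < x\<close> in \<open>auto intro!: continuous_intros\<close>)
  ultimately show ?thesis by simp
qed

lemma powr_log_add_div_ln:
  assumes "0 < b" "b \<noteq> 1" "0 < x"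
  shows "b powr (log b x + w / ln b) = x * exp w"
  using assms by (simp add: powr_def log_def distrib_right exp_add)

lemma tendsto_lambertW0_div_affine:
  assumes "0 < A" "0 < c"
  shows "((\<lambda>p. lambertW0 (p / (A * (c * p + 1)))) \<longlongrightarrow> lambertW0 (1 / (A * c))) at_top"
proof -
  have "((\<lambda>p. p / (A * (c * p + 1))) \<longlongrightarrow> 1 / (A * c)) at_top"
    using assms by real_asymp (simp add: inverse_eq_divide)
  with isCont_lambertW0[of "1 / (A * c)"] assms show ?thesis
    by (intro isCont_tendsto_compose[of _ lambertW0]) auto
qed

lemma tendsto_throughput:
  assumes "0 < A" "0 < c"
  defines "W \<equiv> \<lambda>p. lambertW0 (p / (A * (c * p + 1)))"
  shows "((\<lambda>p. W p * exp (- (A / p) * ((c * p + 1) * exp (W p) - 1))) \<longlongrightarrow>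
           lambertW0 (1 / (A * c)) * exp (- (A * c) * exp (lambertW0 (1 / (A * c))))) at_top"
proof -
  have lim: "((\<lambda>p. A / p * (c * p + 1)) \<longlongrightarrow> A * c) at_top" "((\<lambda>p. A / p) \<longlongrightarrow> 0) at_top"
    using assms by real_asymp+
  have "((\<lambda>p. W p * exp (- (A / p * (c * p + 1) * exp (W p) - A / p))) \<longlongrightarrow>
           lambertW0 (1 / (A * c)) * exp (- (A * c * exp (lambertW0 (1 / (A * c))) - 0))) at_top"
    unfolding W_def by (intro lim tendsto_lambertW0_div_affine assms tendsto_intros)
  then show ?thesis by (simp add: right_diff_distrib mult.assoc)
qed

lemma optimal_rates_limits:
  fixes A c :: real
  assumes A: "0 < A" and c: "0 < c"
  defines "Ree \<equiv> \<lambda>p. log 2 (c * p + 1)"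
  defines "Rss \<equiv> \<lambda>p. lambertW0 (2 powr (- Ree p) / (A / p)) / ln 2"
  shows "filterlim (\<lambda>p. Ree p + Rss p) at_top at_top"
    and "(Rss \<longlongrightarrow> lambertW0 (1 / (A * c)) / ln 2) at_top"
    and "((\<lambda>p. Rss p * exp (- (A / p) * (2 powr (Ree p + Rss p) - 1))) \<longlongrightarrow>
          lambertW0 (1 / (A * c)) / ln 2 * exp (- (A * c) * exp (lambertW0 (1 / (A * c))))) at_top"
proof -
  define W where "W = (\<lambda>p. lambertW0 (p / (A * (c * p + 1))))"
  have Rss: "\<forall>\<^sub>F p in at_top. Rss p = W p / ln 2"
  proof (rule eventually_mono[OF eventually_gt_at_top[of 0]])
    fix p :: real assume "0 < p"
    with c show "Rss p = W p / ln 2"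
      by (simp add: Rss_def Ree_def W_def powr_minus add_pos_pos field_simps)
  qed
  have W_lim: "((\<lambda>p. W p / ln 2) \<longlongrightarrow> lambertW0 (1 / (A * c)) / ln 2) at_top"
    unfolding W_def by (intro tendsto_divide tendsto_lambertW0_div_affine A c tendsto_const) simp
  from Rss W_lim show "(Rss \<longlongrightarrow> lambertW0 (1 / (A * c)) / ln 2) at_top"
    by (rule tendsto_cong[THEN iffD2])
  have "filterlim (\<lambda>p. W p / ln 2 + Ree p) at_top at_top"
    unfolding Ree_def using c by (intro filterlim_tendsto_add_at_top[OF W_lim]) real_asymp
  with Rss show "filterlim (\<lambda>p. Ree p + Rss p) at_top at_top"
    by (auto simp: add.commute elim: filterlim_cong[OF refl refl, THEN iffD2, rotated])
  have "\<forall>\<^sub>F p in at_top. Rss p * exp (- (A / p) * (2 powr (Ree p + Rss p) - 1))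
          = W p * exp (- (A / p) * ((c * p + 1) * exp (W p) - 1)) / ln 2"
    using Rss eventually_gt_at_top[of 0]
  proof eventually_elim
    case (elim p)
    with c have "2 powr (Ree p + Rss p) = (c * p + 1) * exp (W p)"
      by (simp add: Ree_def powr_log_add_div_ln add_pos_pos)
    with elim(1) show ?case by simp
  qed
  moreover have "((\<lambda>p. W p * exp (- (A / p) * ((c * p + 1) * exp (W p) - 1)) / ln 2) \<longlongrightarrow>
      lambertW0 (1 / (A * c)) * exp (- (A * c) * exp (lambertW0 (1 / (A * c)))) / ln 2) at_top"
    unfolding W_def by (intro tendsto_divide tendsto_throughput A c tendsto_const) simp
  ultimately show "((\<lambda>p. Rss p * exp (- (A / p) * (2 powr (Ree p + Rss p) - 1))) \<longlongrightarrow>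
      lambertW0 (1 / (A * c)) / ln 2 * exp (- (A * c) * exp (lambertW0 (1 / (A * c))))) at_top"
    by (simp add: tendsto_cong)
qed

theorem corollary4:
  fixes N :: nat and L alpha lam_e eps :: real
  assumes hN: "N \<ge> 1" and hL: "L > 0" and ha: "alpha > 0" and hl: "lam_e > 0"
    and he: "0 < eps" "eps < 1"
  defines "K1 \<equiv> pi * lam_e * Gamma (2 / alpha + 1)"
  defines "Wc \<equiv> lambertW0 ((alpha / 2) * (ln (1 / (1 - eps)) / (real N * K1)) powr (- alpha / 2))"
  defines "K5 \<equiv> (2 * real N / alpha) * ((L / real N) powr alpha + 1) * Wc"
  defines "K4 \<equiv> (\<lambda>p::real. real N * ((L / real N) powr alpha + 1) / p)"
  defines "Ree \<equiv> (\<lambda>p::real. log 2 ((2 * p / alpha) * Wc + 1))"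
  defines "Rss \<equiv> (\<lambda>p::real. lambertW0 (2 powr (- Ree p) / K4 p) / ln 2)"
  defines "Rtt \<equiv> (\<lambda>p::real. Ree p + lambertW0 (2 powr (- Ree p) / K4 p) / ln 2)"
  defines "U \<equiv> (\<lambda>p::real. Rss p / real N * exp (- K4 p * (2 powr (Rtt p) - 1)))"
  shows "filterlim Rtt at_top at_top \<and>
    (Rss \<longlongrightarrow> lambertW0 (1 / K5) / ln 2) at_top \<and>
    (U \<longlongrightarrow> lambertW0 (1 / K5) / (real N * ln 2)
            * exp (- K5 * exp (lambertW0 (1 / K5)))) at_top"
proof -
  define A where "A = real N * ((L / real N) powr alpha + 1)"
  define c where "c = 2 * Wc / alpha"
  have "0 < Gamma (2 / alpha + 1)" using ha by (intro Gamma_real_pos) (simp add: add_pos_nonneg)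
  then have "0 < Wc"
    unfolding Wc_def K1_def using ha hl he hN by (intro lambertW0_pos) simp
  then have c: "0 < c" using ha by (simp add: c_def)
  have A: "0 < A" using hN unfolding A_def by (intro mult_pos_pos add_nonneg_pos) auto
  have K5: "K5 = A * c" by (simp add: K5_def A_def c_def)
  have Ree: "Ree = (\<lambda>p. log 2 (c * p + 1))" by (simp add: Ree_def c_def field_simps)
  have K4: "K4 = (\<lambda>p. A / p)" by (simp add: K4_def A_def)
  have Rtt: "Rtt = (\<lambda>p. Ree p + Rss p)" by (simp add: Rtt_def Rss_def)
  note lims = optimal_rates_limits[OF A c]
  show ?thesis
    using lims(1,2) tendsto_divide[OF lims(3) tendsto_const, of "real N"] hN
    by (simp add: Rtt U_def Rss_def Ree K4 K5 mult.commute)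
qed

end
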